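(* Let $c,d>0$ with $cd\le1$ and $g(x)=xF(c,d;c+d;x)$ for $x\in(0,1)$. For every fixed $s>0$, the function $p\mapsto \dfrac{1}{p}\,g\!\left(\frac{s^p}{1+s^p}\right)$ is monotone decreasing on $(0,\infty)$.
   Context: $F(a,b;c;x)$ is the Gaussian hypergeometric function $\sum_{n\ge0}\frac{(a)_n(b)_n}{(c)_n}\frac{x^n}{n!}$ ($|x|<1$), with $(a)_n=a(a+1)\cdots(a+n-1)$, $(a)_0=1$. *)

theory Defs
  imports "HOL-Analysis.Analysis"
begin

definition hyp2F1 :: "real \<Rightarrow> real \<Rightarrow> real \<Rightarrow> real \<Rightarrow> real" where
  "hyp2F1 a b c x =
     (\<Sum>n. pochhammer a n * pochhammer b n / pochhammer c n * x ^ n / fact n)"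

end

theory Submission
  imports Defs
begin

(* Write x = s^p/(1+s^p) = logistic(t) with t = p ln s, where
   logistic t = e^t/(1+e^t).  For G(t) = g(logistic t) the derivative of
   p \<mapsto> G(p ln s)/p has the sign of  t G'(t) - G(t),  so it suffices to show
   the "tangent bound"  t G'(t) \<le> G(t)  for all real t.  Here
   G'(t) = phi(logistic t) with phi x = x (1-x) g'(x).

   The tangent bound is proved abstractly (locale logistic_criterion) for any
   positive g on (0,1) whose weighted derivative psi x = (1-x) g'(x) is
   nonnegative and antitone: for t > 0, the function
   tau \<mapsto> G(tau) - G(-tau) - tau G'(t) is nondecreasing on [0,t], because
   phi x \<le> phi u + phi (1-u) whenever 1/2 \<le> u \<le> x < 1.

   For g(x) = x F(c,d;c+d;x) we expand g and g' as power series.  The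
   condition cd \<le> 1 makes the coefficients (n+1) a_n of g' nonincreasing
   (a_n the coefficients of F); hence all coefficients of (1-x) g'(x) beyond
   the constant one are \<le> 0, which gives the antitonicity of psi. *)

definition logistic :: "real \<Rightarrow> real" where
  "logistic t = exp t / (1 + exp t)"

lemma logistic_bounds: "0 < logistic t" "logistic t < 1"
  unfolding logistic_def by (auto simp: add_pos_pos)

lemma logistic_minus: "logistic (-t) = 1 - logistic t"
proof -
  have "1 + exp t > 0" using exp_gt_zero[of t] by linarith
  then show ?thesis unfolding logistic_def exp_minus by (simp add: field_simps)
qed

lemma logistic_0: "logistic 0 = 1/2"
  unfolding logistic_def by simp

lemma logistic_mono: "s \<le> t \<Longrightarrow> logistic s \<le> logistic t"
  unfolding logistic_def by (simp add: divide_simps add_pos_pos) (simp add: algebra_simps)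

lemma logistic_deriv: "(logistic has_real_derivative logistic t * (1 - logistic t)) (at t)"
proof -
  have nz: "1 + exp t \<noteq> 0" using exp_gt_zero[of t] by linarith
  have "((\<lambda>t. exp t / (1 + exp t)) has_real_derivative
      (exp t * (1 + exp t) - exp t * exp t) / (1 + exp t)^2) (at t)"
    using nz by (auto intro!: derivative_eq_intros simp: power2_eq_square)
  moreover have "(exp t * (1 + exp t) - exp t * exp t) / (1 + exp t)^2
      = logistic t * (1 - logistic t)"
    unfolding logistic_def using nz
    by (simp add: divide_simps power2_eq_square) (simp add: algebra_simps)
  ultimately show ?thesis unfolding logistic_def[abs_def] by simp
qed

lemma powr_ratio_eq_logistic:
  fixes s p :: real assumes "s > 0"
  shows "s powr p / (1 + s powr p) = logistic (p * ln s)"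
  using assms by (simp add: powr_def logistic_def mult.commute)

section \<open>An abstract monotonicity criterion\<close>

locale logistic_criterion =
  fixes g g' :: "real \<Rightarrow> real"
  assumes deriv: "\<And>x. 0 < x \<Longrightarrow> x < 1 \<Longrightarrow> (g has_real_derivative g' x) (at x)"
    and pos: "\<And>x. 0 < x \<Longrightarrow> x < 1 \<Longrightarrow> 0 < g x"
    and psi_nonneg: "\<And>x. 0 < x \<Longrightarrow> x < 1 \<Longrightarrow> 0 \<le> (1 - x) * g' x"
    and psi_antitone: "\<And>x y. 0 < x \<Longrightarrow> x \<le> y \<Longrightarrow> y < 1 \<Longrightarrow> (1 - y) * g' y \<le> (1 - x) * g' x"
begin

definition phi :: "real \<Rightarrow> real" where
  "phi x = x * ((1 - x) * g' x)"

lemma comp_logistic_deriv: "((\<lambda>t. g (logistic t)) has_real_derivative phi (logistic t)) (at t)"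
proof -
  have "((\<lambda>t. g (logistic t)) has_real_derivative
      g' (logistic t) * (logistic t * (1 - logistic t))) (at t)"
    using logistic_bounds by (intro DERIV_chain2[OF deriv logistic_deriv]) auto
  then show ?thesis unfolding phi_def by (simp add: algebra_simps)
qed

lemma phi_nonneg: "0 < x \<Longrightarrow> x < 1 \<Longrightarrow> 0 \<le> phi x"
  unfolding phi_def using psi_nonneg by simp

lemma phi_reflection:
  assumes "1/2 \<le> u" "u \<le> x" "x < 1"
  shows "phi x \<le> phi u + phi (1 - u)"
proof -
  let ?psi = "\<lambda>x. (1 - x) * g' x"
  have "phi x \<le> ?psi x"
    unfolding phi_def using assms psi_nonneg[of x] by (intro mult_left_le_one_le) auto
  also have "\<dots> \<le> ?psi u" using assms by (intro psi_antitone) auto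
  also have "\<dots> = u * ?psi u + (1 - u) * ?psi u" by (simp add: algebra_simps)
  also have "\<dots> \<le> u * ?psi u + (1 - u) * ?psi (1 - u)"
    using assms by (intro add_left_mono mult_left_mono psi_antitone) auto
  finally show ?thesis unfolding phi_def by simp
qed

lemma tangent_bound: "t * phi (logistic t) \<le> g (logistic t)"
proof (cases "t > 0")
  case False
  then have "t * phi (logistic t) \<le> 0"
    using phi_nonneg logistic_bounds by (simp add: mult_nonpos_nonneg)
  also have "\<dots> < g (logistic t)" using pos logistic_bounds by auto
  finally show ?thesis by simp
next
  case True
  define M where "M = (\<lambda>\<tau>. g (logistic \<tau>) - g (logistic (-\<tau>)) - \<tau> * phi (logistic t))"
  have "M 0 \<le> M t"
  proof (rule DERIV_nonneg_imp_nondecreasing[of 0 t M])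
    fix \<tau> assume \<tau>: "0 \<le> \<tau>" "\<tau> \<le> t"
    let ?M' = "phi (logistic \<tau>) + phi (logistic (-\<tau>)) - phi (logistic t)"
    have "((\<lambda>\<tau>. g (logistic (-\<tau>))) has_real_derivative phi (logistic (-\<tau>)) * (-1)) (at \<tau>)"
      by (rule DERIV_chain2[OF comp_logistic_deriv]) (auto intro!: derivative_eq_intros)
    then have "(M has_real_derivative ?M') (at \<tau>)"
      unfolding M_def by (auto intro!: derivative_eq_intros comp_logistic_deriv)
    moreover have "phi (logistic t) \<le> phi (logistic \<tau>) + phi (logistic (-\<tau>))"
      using logistic_mono[OF \<tau>(1)] logistic_mono[OF \<tau>(2)] logistic_bounds[of t]
      by (auto simp: logistic_minus logistic_0 intro!: phi_reflection)
    ultimately show "\<exists>y. (M has_real_derivative y) (at \<tau>) \<and> 0 \<le> y" by auto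
  qed (use True in simp)
  then have "t * phi (logistic t) \<le> g (logistic t) - g (logistic (-t))"
    by (simp add: M_def)
  moreover have "0 < g (logistic (-t))" using pos logistic_bounds by auto
  ultimately show ?thesis by simp
qed

text \<open>The criterion: for every real a, p \<mapsto> g(logistic(p a))/p is antitone on (0,\<infinity>),
  since its derivative is (t G'(t) - G(t))/p^2 with t = p a.\<close>
theorem antimono_scaled:
  "antimono_on {0<..} (\<lambda>p::real. (1 / p) * g (logistic (p * a)))"
proof (rule monotone_onI)
  let ?F = "\<lambda>p::real. (1 / p) * g (logistic (p * a))"
  fix p q :: real assume pq: "p \<in> {0<..}" "q \<in> {0<..}" "p \<le> q"
  show "?F q \<le> ?F p"
  proof (rule DERIV_nonpos_imp_nonincreasing[of p q ?F])
    fix x assume "p \<le> x" "x \<le> q"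
    then have x: "x > 0" using pq by simp
    let ?t = "x * a"
    have "((\<lambda>x. g (logistic (x * a))) has_real_derivative phi (logistic ?t) * a) (at x)"
      by (rule DERIV_chain2[OF comp_logistic_deriv]) (auto intro!: derivative_eq_intros)
    moreover have "((\<lambda>x. 1 / x) has_real_derivative - (1 / x^2)) (at x)"
      using x by (auto intro!: derivative_eq_intros simp: power2_eq_square)
    ultimately have "(?F has_real_derivative
        - (1 / x^2) * g (logistic ?t) + (1 / x) * (phi (logistic ?t) * a)) (at x)"
      using DERIV_mult by (fastforce simp: algebra_simps)
    moreover have "- (1 / x^2) * g (logistic ?t) + (1 / x) * (phi (logistic ?t) * a)
        = (?t * phi (logistic ?t) - g (logistic ?t)) / x^2"
      using x by (simp add: field_simps power2_eq_square)
    moreover have "\<dots> \<le> 0" using tangent_bound[of ?t] by (intro divide_nonpos_nonneg) auto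
    ultimately show "\<exists>y. (?F has_real_derivative y) (at x) \<and> y \<le> 0" by auto
  qed (use pq in simp)
qed

end

section \<open>Coefficients of the hypergeometric series F(c,d;c+d;x)\<close>

definition hgcoeff :: "real \<Rightarrow> real \<Rightarrow> nat \<Rightarrow> real" where
  "hgcoeff c d n = pochhammer c n * pochhammer d n / pochhammer (c + d) n / fact n"

lemma hyp2F1_eq_suminf: "hyp2F1 c d (c + d) x = (\<Sum>n. hgcoeff c d n * x^n)"
  unfolding hyp2F1_def hgcoeff_def by simp

lemma hgcoeff_0 [simp]: "hgcoeff c d 0 = 1"
  by (simp add: hgcoeff_def)

lemma hgcoeff_pos: "c > 0 \<Longrightarrow> d > 0 \<Longrightarrow> 0 < hgcoeff c d n"
  unfolding hgcoeff_def by (auto intro!: divide_pos_pos mult_pos_pos pochhammer_pos)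

lemma hgcoeff_Suc:
  assumes "c > 0" "d > 0"
  shows "hgcoeff c d (Suc n) = hgcoeff c d n * ((c + n) * (d + n) / ((c + d + n) * (n + 1)))"
proof -
  have "pochhammer (c + d) n > 0" using assms by (intro pochhammer_pos) auto
  moreover have "c + d + n > 0" using assms by simp
  ultimately show ?thesis unfolding hgcoeff_def
    by (simp add: pochhammer_Suc fact_Suc field_simps)
qed

text \<open>For c, d > 0 with cd \<le> 1, also 2cd \<le> c + d (via 4(cd)^2 \<le> 4cd \<le> (c+d)^2).\<close>
lemma two_mult_le_add:
  fixes c d :: real
  assumes "c > 0" "d > 0" "c * d \<le> 1"
  shows "2 * c * d \<le> c + d"
proof -
  have "(c * d) * (c * d) \<le> c * d" using assms by (intro mult_left_le) auto
  moreover have "(2 * c * d)^2 = 4 * ((c * d) * (c * d))" by (simp add: power2_eq_square)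
  moreover have "(c + d)^2 - 4 * (c * d) = (c - d)^2" by (simp add: power2_eq_square algebra_simps)
  ultimately have "(2 * c * d)^2 \<le> (c + d)^2" using zero_le_power2[of "c - d"] by linarith
  then show ?thesis by (rule power2_le_imp_le) (use assms in simp)
qed

lemma weighted_hgcoeff_decreasing:
  fixes c d :: real
  assumes "c > 0" "d > 0" "c * d \<le> 1"
  shows "(real n + 2) * hgcoeff c d (Suc n) \<le> (real n + 1) * hgcoeff c d n"
proof -
  define r where "r = (c + n) * (d + n) / ((c + d + n) * (n + 1))"
  have den: "(c + d + n) * (n + 1) > 0" using assms by simp
  have "(n+1)^2 * (c+d+n) - (n+2) * ((c+n) * (d+n)) = (1 - c*d) * n + (c + d - 2*c*d)"
    by (simp add: algebra_simps power2_eq_square)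
  moreover have "(1 - c*d) * n \<ge> 0" using assms by simp
  moreover have "c + d - 2*c*d \<ge> 0" using two_mult_le_add[OF assms] by simp
  ultimately have "(n+2) * ((c+n) * (d+n)) \<le> (n+1)^2 * (c+d+n)" by linarith
  then have "(n + 2) * ((c + n) * (d + n)) / ((c + d + n) * (n + 1)) \<le> n + 1"
    using den by (simp add: pos_divide_le_eq power2_eq_square algebra_simps)
  then have "(real n + 2) * r \<le> real n + 1" by (simp add: r_def algebra_simps)
  then have "(real n + 2) * (hgcoeff c d n * r) \<le> (real n + 1) * hgcoeff c d n"
    using hgcoeff_pos[OF assms(1,2), of n]
    by (metis mult.left_commute mult.commute mult_le_cancel_left_pos)
  then show ?thesis by (subst hgcoeff_Suc[OF assms(1,2)]) (simp only: r_def)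
qed

lemma weighted_hgcoeff_le_1:
  assumes "c > 0" "d > 0" "c * d \<le> 1"
  shows "(real n + 1) * hgcoeff c d n \<le> 1"
proof (induction n)
  case (Suc n)
  then show ?case using weighted_hgcoeff_decreasing[OF assms, of n] by (simp add: add.commute)
qed simp

text \<open>In particular all (weighted) coefficients are bounded by a_0 = 1,
  so both series converge on the open unit disc.\<close>
lemma hgcoeff_le_1:
  assumes "c > 0" "d > 0" "c * d \<le> 1"
  shows "hgcoeff c d n \<le> 1"
proof -
  have "hgcoeff c d n \<le> (real n + 1) * hgcoeff c d n"
    using hgcoeff_pos[OF assms(1,2), of n] by (simp add: distrib_right)
  then show ?thesis using weighted_hgcoeff_le_1[OF assms, of n] by linarith
qed

lemma summable_bounded_coeffs:
  fixes f :: "nat \<Rightarrow> real"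
  assumes "\<And>n. \<bar>f n\<bar> \<le> 1" "\<bar>x\<bar> < 1"
  shows "summable (\<lambda>n. f n * x^n)"
proof (rule summable_comparison_test[OF _ summable_geometric[of "\<bar>x\<bar>"]])
  show "\<exists>N. \<forall>n\<ge>N. norm (f n * x^n) \<le> \<bar>x\<bar>^n"
    using assms by (auto simp: abs_mult power_abs intro!: mult_left_le_one_le)
qed (use assms in auto)

section \<open>The function g(x) = x F(c,d;c+d;x) and its derivative as power series\<close>

text \<open>g(x) = x F(x) = \<Sum> gcoeff n x^n, and its termwise derivative
  g'(x) = \<Sum> (n+1) a_n x^n, where a_n = hgcoeff c d n.\<close>
definition gcoeff :: "real \<Rightarrow> real \<Rightarrow> nat \<Rightarrow> real" where
  "gcoeff c d n = (if n = 0 then 0 else hgcoeff c d (n - 1))"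

definition gser :: "real \<Rightarrow> real \<Rightarrow> real \<Rightarrow> real" where
  "gser c d x = (\<Sum>n. gcoeff c d n * x^n)"

definition gser' :: "real \<Rightarrow> real \<Rightarrow> real \<Rightarrow> real" where
  "gser' c d x = (\<Sum>n. (real n + 1) * hgcoeff c d n * x^n)"

lemma diffs_gcoeff: "diffs (gcoeff c d) n = (real n + 1) * hgcoeff c d n"
  by (simp add: diffs_def gcoeff_def)

context
  fixes c d :: real
  assumes c: "c > 0" and d: "d > 0" and cd: "c * d \<le> 1"
begin

lemma summable_gser': "\<bar>x\<bar> < 1 \<Longrightarrow> summable (\<lambda>n. (real n + 1) * hgcoeff c d n * x^n)"
  using weighted_hgcoeff_le_1[OF c d cd] hgcoeff_pos[OF c d]
  by (intro summable_bounded_coeffs) (auto simp: abs_mult less_imp_le)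

lemma gser_deriv: "\<bar>x\<bar> < 1 \<Longrightarrow> (gser c d has_real_derivative gser' c d x) (at x)"
  unfolding gser_def[abs_def] gser'_def diffs_gcoeff[symmetric]
  using hgcoeff_le_1[OF c d cd] hgcoeff_pos[OF c d]
  by (intro termdiffs_strong'[of 1] summable_bounded_coeffs)
     (auto simp: gcoeff_def less_imp_le)

lemma gser_eq: "\<bar>x\<bar> < 1 \<Longrightarrow> x * hyp2F1 c d (c + d) x = gser c d x"
proof -
  assume x: "\<bar>x\<bar> < 1"
  have "summable (\<lambda>n. hgcoeff c d n * x^n)"
    using hgcoeff_le_1[OF c d cd] hgcoeff_pos[OF c d] x
    by (intro summable_bounded_coeffs) (auto simp: less_imp_le)
  then have "(\<lambda>n. x * (hgcoeff c d n * x^n)) sums (x * hyp2F1 c d (c + d) x)"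
    unfolding hyp2F1_eq_suminf by (intro sums_mult summable_sums)
  then have "(\<lambda>n. gcoeff c d (Suc n) * x^Suc n) sums (x * hyp2F1 c d (c + d) x)"
    by (simp add: gcoeff_def algebra_simps)
  then have "(\<lambda>n. gcoeff c d n * x^n) sums (x * hyp2F1 c d (c + d) x)"
    by (subst (asm) sums_Suc_iff) (simp add: gcoeff_def)
  then show ?thesis unfolding gser_def by (simp add: sums_iff)
qed

text \<open>Positivity of g and nonnegativity of g' on (0,1): all coefficients are \<ge> 0.\<close>
lemma gser_pos: "0 < x \<Longrightarrow> x < 1 \<Longrightarrow> 0 < gser c d x"
proof -
  assume x: "0 < x" "x < 1"
  have "summable (\<lambda>n. gcoeff c d n * x^n)"
    using hgcoeff_le_1[OF c d cd] hgcoeff_pos[OF c d] x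
    by (intro summable_bounded_coeffs) (auto simp: gcoeff_def less_imp_le)
  then have "(\<Sum>n\<in>{1}. gcoeff c d n * x^n) \<le> gser c d x"
    unfolding gser_def using hgcoeff_pos[OF c d] x
    by (intro sum_le_suminf) (auto simp: gcoeff_def less_imp_le)
  then show ?thesis using x by (simp add: gcoeff_def)
qed

lemma gser'_nonneg: "0 \<le> x \<Longrightarrow> x < 1 \<Longrightarrow> 0 \<le> gser' c d x"
  unfolding gser'_def using summable_gser' hgcoeff_pos[OF c d]
  by (intro suminf_nonneg) (auto simp: less_imp_le)

text \<open>Coefficients of (1 - x) g'(x); all but the constant one are nonpositive.\<close>
definition psicoeff :: "nat \<Rightarrow> real" where
  "psicoeff n = (real n + 1) * hgcoeff c d n - (if n = 0 then 0 else real n * hgcoeff c d (n - 1))"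

lemma psicoeff_nonpos: "n > 0 \<Longrightarrow> psicoeff n \<le> 0"
  using weighted_hgcoeff_decreasing[OF c d cd, of "n - 1"]
  by (auto simp: psicoeff_def add.commute)

lemma psi_sums: "\<bar>x\<bar> < 1 \<Longrightarrow> (\<lambda>n. psicoeff n * x^n) sums ((1 - x) * gser' c d x)"
proof -
  assume x: "\<bar>x\<bar> < 1"
  let ?D = "\<lambda>n. (real n + 1) * hgcoeff c d n * x^n"
  have D: "?D sums gser' c d x"
    unfolding gser'_def using summable_gser'[OF x] by (simp add: summable_sums)
  then have "(\<lambda>n. x * ?D n) sums (x * gser' c d x)" by (rule sums_mult)
  then have "(\<lambda>n. (if Suc n = 0 then 0 else Suc n * hgcoeff c d (Suc n - 1)) * x^Suc n)
      sums (x * gser' c d x)"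
    by (simp add: algebra_simps)
  then have "(\<lambda>n. (if n = 0 then 0 else n * hgcoeff c d (n - 1)) * x^n) sums (x * gser' c d x)"
    by (subst (asm) sums_Suc_iff) simp
  from sums_diff[OF D this] show ?thesis
    unfolding psicoeff_def by (simp add: algebra_simps)
qed

lemma psi_antitone:
  assumes "0 \<le> x" "x \<le> y" "y < 1"
  shows "(1 - y) * gser' c d y \<le> (1 - x) * gser' c d x"
proof (rule sums_le)
  show "(\<lambda>n. psicoeff n * y^n) sums ((1 - y) * gser' c d y)"
    using assms by (intro psi_sums) auto
  show "(\<lambda>n. psicoeff n * x^n) sums ((1 - x) * gser' c d x)"
    using assms by (intro psi_sums) auto
  show "psicoeff n * y^n \<le> psicoeff n * x^n" for n
  proof (cases "n = 0")
    case False
    have "x^n \<le> y^n" using assms by (intro power_mono) auto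
    then show ?thesis using psicoeff_nonpos[of n] False by (intro mult_left_mono_neg) auto
  qed simp
qed

lemma logistic_criterion_gser: "logistic_criterion (gser c d) (gser' c d)"
  using gser_deriv gser_pos gser'_nonneg psi_antitone
  by unfold_locales auto

end

theorem mainTheorem8:
  fixes c d s :: real and g :: "real \<Rightarrow> real"
  assumes "c > 0" and "d > 0" and "c * d \<le> 1"
    and "\<And>x. x \<in> {0<..<1} \<Longrightarrow> g x = x * hyp2F1 c d (c + d) x"
    and "s > 0"
  shows "antimono_on {0<..} (\<lambda>p::real. (1 / p) * g (s powr p / (1 + s powr p)))"
proof -
  interpret logistic_criterion "gser c d" "gser' c d"
    using assms(1-3) by (rule logistic_criterion_gser)
  have "g (s powr p / (1 + s powr p)) = gser c d (logistic (p * ln s))" for p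
    using assms(4)[of "logistic (p * ln s)"] gser_eq[OF assms(1-3), of "logistic (p * ln s)"]
      logistic_bounds[of "p * ln s"] powr_ratio_eq_logistic[OF assms(5)]
    by simp
  with antimono_scaled[of "ln s"] show ?thesis by simp
qed

end
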